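(* For each $m\in\mathbb Z_{\ge1}$, \[\sum_{\ell=0}^{\lfloor m/2\rfloor}\binom{2\ell}{\ell}\sum_{1\le i_1<\cdots<i_{m-2\ell}\le m}\ \prod_{j=1}^{m-2\ell}(x_{i_j}+x_{i_j}^{-1})=\sum_{j=0}^{\lfloor m/2\rfloor}\chi^{\operatorname{Sp}(2m)}_{(1^{m-2j})},\] and \[\prod_{i=1}^m(x_i+x_i^{-1})=\sum_{j=0}^{\lfloor m/2\rfloor}(-1)^j\chi^{\operatorname{Sp}(2m)}_{(1^{m-2j})}.\]
   Context: $\chi_\lambda^{\operatorname{Sp}(2m)}=\chi_\lambda^{\operatorname{Sp}(2m)}(x_1^{\pm1},\dots,x_m^{\pm1})$ is the character of the irreducible representation of $\operatorname{Sp}(2m,\mathbb C)$ with highest weight the partition $\lambda$, evaluated at a torus element with eigenvalues $x_1^{\pm1},\dots,x_m^{\pm1}$; $(1^k)$ is the partition with $k$ parts equal to $1$, and $\chi_{(1^0)}=1$. The inner sum over $1\le i_1<\cdots<i_k\le m$ is set to be $1$ when $k=0$. *)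

theory Defs
  imports Complex_Main "HOL-Combinatorics.Permutations"
begin

text \<open>Weyl numerator for Sp(2m): the m x m determinant
  det( x_j^(lam_i + m - i + 1) - x_j^(-(lam_i + m - i + 1)) )_{1 <= i,j <= m},
  written out via the Leibniz formula.  Here lam :: nat => nat gives the parts
  lam_1 >= ... >= lam_m of a partition with at most m parts.\<close>
definition sp_weyl_num :: "nat \<Rightarrow> (nat \<Rightarrow> nat) \<Rightarrow> (nat \<Rightarrow> complex) \<Rightarrow> complex" where
  "sp_weyl_num m lam x =
     (\<Sum>p | p permutes {1..m}. of_int (sign p) *
        (\<Prod>i\<in>{1..m}. x (p i) ^ (lam i + m - i + 1) - inverse (x (p i)) ^ (lam i + m - i + 1)))"

text \<open>Character of the irreducible Sp(2m,C)-representation of highest weight lam,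
  at the torus element with eigenvalues x_1^{+-1},...,x_m^{+-1}
  (Weyl character formula: numerator for lam divided by numerator for the empty partition).\<close>
definition sp_char :: "nat \<Rightarrow> (nat \<Rightarrow> nat) \<Rightarrow> (nat \<Rightarrow> complex) \<Rightarrow> complex" where
  "sp_char m lam x = sp_weyl_num m lam x / sp_weyl_num m (\<lambda>_. 0) x"

definition one_pow :: "nat \<Rightarrow> nat \<Rightarrow> nat" where
  "one_pow k i = (if 1 \<le> i \<and> i \<le> k then 1 else 0)"

end

(*
  Write y_l = x_l + x_l^-1 and [t]_z = z^t - z^-t, so that the Weyl numerator of a partition is the
  determinant of the rows [lam_i + m - i + 1]_(x_j).  For every column j the product
  (x_j - x_j^-1) * prod_l (y_j - y_l) vanishes; expanded binomially it is a linear relation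
  among the [t]_(x_j) with |t| <= m + 1 whose only term with t = m + 1 is [m + 1]_(x_j),
  the first row of the numerator of (1^k).  Substituting the relation into that row, every
  remaining [t] either repeats another row of the matrix or, for t = +-(m + 1 - k), turns it
  into a cyclic permutation of the denominator.  This writes chi_(1^k) as an explicit
  combination of the products prod_(l in S) y_l with binomial coefficients.  Summing over
  k = m - 2j with weights 1, resp. (-1)^j, the binomial coefficients attached to a set S
  collapse to C(n, n/2), resp. to [n = 0], where n = m - |S|.
*)
theory Submission
  imports Defs
begin

section \<open>Leibniz determinants\<close>

definition leibniz_det :: "'i set \<Rightarrow> ('i \<Rightarrow> 'i \<Rightarrow> 'a::comm_ring_1) \<Rightarrow> 'a" where
  "leibniz_det A R = (\<Sum>p | p permutes A. of_int (sign p) * (\<Prod>i\<in>A. R i (p i)))"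

lemma leibniz_det_cong:
  assumes "\<And>i j. i \<in> A \<Longrightarrow> j \<in> A \<Longrightarrow> R i j = R' i j"
  shows "leibniz_det A R = leibniz_det A R'"
proof -
  have "(\<Prod>i\<in>A. R i (p i)) = (\<Prod>i\<in>A. R' i (p i))" if "p permutes A" for p
    using assms permutes_in_image[OF that] by (intro prod.cong) auto
  then show ?thesis
    unfolding leibniz_det_def by (intro sum.cong) auto
qed

lemma leibniz_det_permute_rows:
  assumes A: "finite A" and s: "s permutes A"
  shows "leibniz_det A (\<lambda>i. R (s i)) = of_int (sign s) * leibniz_det A R"
proof -
  have perm_s: "permutation s"
    using A s permutation_permutes by blast
  have "leibniz_det A (\<lambda>i. R (s i))
      = (\<Sum>p | p permutes A. of_int (sign p) * (\<Prod>i\<in>A. R i ((p \<circ> inv s) i)))"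
    unfolding leibniz_det_def
    using prod.permute[OF s, of "\<lambda>i. R i ((_ \<circ> inv s) i)"] permutes_inverses(2)[OF s]
    by (intro sum.cong refl) (simp add: o_def)
  also have "\<dots> = (\<Sum>p | p permutes A. of_int (sign (p \<circ> s)) * (\<Prod>i\<in>A. R i ((p \<circ> s \<circ> inv s) i)))"
    by (rule sum_permutations_compose_right[OF s])
  also have "\<dots> = (\<Sum>p | p permutes A. of_int (sign s) * (of_int (sign p) * (\<Prod>i\<in>A. R i (p i))))"
  proof (intro sum.cong refl)
    fix p assume "p \<in> {p. p permutes A}"
    then have "permutation p"
      using A permutation_permutes by blast
    moreover have "p \<circ> s \<circ> inv s = p"
      using permutes_inv_o(1)[OF s] by (simp add: o_assoc[symmetric])
    ultimately show "of_int (sign (p \<circ> s)) * (\<Prod>i\<in>A. R i ((p \<circ> s \<circ> inv s) i))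
        = of_int (sign s) * (of_int (sign p) * (\<Prod>i\<in>A. R i (p i)))"
      by (simp add: sign_compose[OF _ perm_s])
  qed
  finally show ?thesis
    by (simp add: leibniz_det_def sum_distrib_left)
qed

lemma leibniz_det_identical_rows:
  fixes R :: "'i \<Rightarrow> 'i \<Rightarrow> 'a::{idom, ring_char_0}"
  assumes "finite A" "r \<in> A" "s \<in> A" "r \<noteq> s" "\<And>j. j \<in> A \<Longrightarrow> R r j = R s j"
  shows "leibniz_det A R = 0"
proof -
  have "leibniz_det A R = leibniz_det A (\<lambda>i. R (transpose r s i))"
    by (rule leibniz_det_cong) (use assms in \<open>auto simp: transpose_def\<close>)
  also have "\<dots> = - leibniz_det A R"
    using leibniz_det_permute_rows[OF assms(1) permutes_swap_id[OF assms(2,3)]] assms(4)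
    by (simp add: sign_swap_id)
  finally show ?thesis
    by simp
qed

lemma leibniz_det_linear_row:
  assumes "finite A" "finite Q" "r \<in> A" "\<And>j. j \<in> A \<Longrightarrow> R r j = (\<Sum>q\<in>Q. c q * V q j)"
  shows "leibniz_det A R = (\<Sum>q\<in>Q. c q * leibniz_det A (R(r := V q)))"
proof -
  have "of_int (sign p) * (\<Prod>i\<in>A. R i (p i))
      = (\<Sum>q\<in>Q. c q * (of_int (sign p) * (\<Prod>i\<in>A. (R(r := V q)) i (p i))))"
    if p: "p permutes A" for p
  proof -
    have pr: "p r \<in> A"
      using assms(3) permutes_in_image[OF p] by simp
    have split: "(\<Prod>i\<in>A. R' i (p i)) = R' r (p r) * (\<Prod>i\<in>A - {r}. R i (p i))"
      if "\<And>i. i \<noteq> r \<Longrightarrow> R' i = R i" for R'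
    proof -
      have "(\<Prod>i\<in>A - {r}. R' i (p i)) = (\<Prod>i\<in>A - {r}. R i (p i))"
        using that by (intro prod.cong) auto
      then show ?thesis
        using prod.remove[OF assms(1) assms(3), of "\<lambda>i. R' i (p i)"] by simp
    qed
    show ?thesis
      using split[of R] split[of "R(r := V _)"] assms(4)[OF pr]
      by (simp add: sum_distrib_left sum_distrib_right mult_ac)
  qed
  then show ?thesis
    unfolding leibniz_det_def sum_distrib_left
    by (simp add: sum.swap[of _ Q])
qed

lemma leibniz_det_zero_row:
  assumes "finite A" "r \<in> A" "\<And>j. j \<in> A \<Longrightarrow> R r j = 0"
  shows "leibniz_det A R = 0"
  using leibniz_det_linear_row[of A "{}" r R] assms by simp

lemma leibniz_det_scale_row:
  assumes "finite A" "r \<in> A"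
  shows "leibniz_det A (R(r := (\<lambda>j. c * V j))) = c * leibniz_det A (R(r := V))"
  using leibniz_det_linear_row[of A "{()}" r "R(r := (\<lambda>j. c * V j))" "\<lambda>_. c" "\<lambda>_. V"] assms
  by simp

definition cyclic_shift :: "nat \<Rightarrow> nat \<Rightarrow> nat" where
  "cyclic_shift k i = (if i = 1 then k else if 2 \<le> i \<and> i \<le> k then i - 1 else i)"

lemma cyclic_shift_permutes_sign:
  assumes "1 \<le> k"
  shows "cyclic_shift k permutes {1..k} \<and> sign (cyclic_shift k) = (-1) ^ (k - 1)"
  using assms
proof (induction k rule: dec_induct)
  case base
  have "cyclic_shift 1 = id"
    by (auto simp: cyclic_shift_def fun_eq_iff)
  then show ?case
    by (simp add: id_def)
next
  case (step k)
  have shift_Suc: "cyclic_shift (Suc k) = transpose k (Suc k) \<circ> cyclic_shift k"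
    using step(1) by (auto simp: cyclic_shift_def fun_eq_iff transpose_def)
  have shift_permutes: "cyclic_shift k permutes {1..Suc k}"
    using step(3) permutes_subset by fastforce
  have swap_permutes: "transpose k (Suc k) permutes {1..Suc k}"
    using step(1) by (intro permutes_swap_id) auto
  have "permutation (cyclic_shift k)" "permutation (transpose k (Suc k))"
    using shift_permutes swap_permutes permutation_permutes by blast+
  then have "sign (cyclic_shift (Suc k)) = - sign (cyclic_shift k)"
    unfolding shift_Suc by (simp add: sign_compose sign_swap_id)
  moreover have "cyclic_shift (Suc k) permutes {1..Suc k}"
    unfolding shift_Suc by (rule permutes_compose[OF shift_permutes swap_permutes])
  ultimately show ?case
    using step(1,3) by (cases k) auto
qed

section \<open>Laurent differences\<close>

definition powi_diff :: "'a::field \<Rightarrow> int \<Rightarrow> 'a" where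
  "powi_diff z t = z powi t - z powi (-t)"

lemma powi_diff_of_nat: "powi_diff z (int a) = z ^ a - inverse z ^ a"
  unfolding powi_diff_def by (simp add: power_int_minus power_inverse)

lemma powi_diff_uminus: "powi_diff z (- t) = - powi_diff z t"
  unfolding powi_diff_def by simp

lemma powi_diff_0 [simp]: "powi_diff z 0 = 0"
  unfolding powi_diff_def by simp

lemma times_power_plus_inverse:
  fixes w :: "'a::field"
  assumes "w \<noteq> 0"
  shows "w * (w + inverse w) ^ n = (\<Sum>k = 0..n. of_nat (n choose k) * w powi (int n + 1 - 2 * int k))"
proof -
  have summand: "w * (of_nat (n choose k) * inverse w ^ k * w ^ (n - k))
      = of_nat (n choose k) * w powi (int n + 1 - 2 * int k)" if "k \<le> n" for k
  proof -
    have "int n + 1 - 2 * int k = int (Suc (n - k)) + - int k"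
      using that by simp
    then have "w powi (int n + 1 - 2 * int k) = w ^ Suc (n - k) * inverse w ^ k"
      by (simp only: power_int_add[OF disjI1[OF assms]] power_int_of_nat power_int_minus
          power_inverse)
    then show ?thesis
      by (simp add: mult_ac)
  qed
  have "w * (w + inverse w) ^ n = w * (\<Sum>k\<le>n. of_nat (n choose k) * inverse w ^ k * w ^ (n - k))"
    by (subst add.commute) (simp only: binomial_ring)
  also have "\<dots> = (\<Sum>k = 0..n. of_nat (n choose k) * w powi (int n + 1 - 2 * int k))"
    unfolding sum_distrib_left atLeast0AtMost[symmetric] by (intro sum.cong refl summand) simp
  finally show ?thesis .
qed

lemma powi_diff_expansion:
  fixes z :: "'a::field"
  assumes "z \<noteq> 0"
  shows "(z - inverse z) * (z + inverse z) ^ n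
       = (\<Sum>k = 0..n. of_nat (n choose k) * powi_diff z (int n + 1 - 2 * int k))"
proof -
  have "inverse z * (z + inverse z) ^ n
      = (\<Sum>k = 0..n. of_nat (n choose k) * inverse (z powi (int n + 1 - 2 * int k)))"
    using times_power_plus_inverse[of "inverse z" n] assms
    by (simp add: add.commute power_int_inverse power_int_minus)
  then show ?thesis
    unfolding powi_diff_def power_int_minus left_diff_distrib times_power_plus_inverse[OF assms]
    by (simp add: right_diff_distrib sum_subtractf)
qed

section \<open>The characters of the fundamental representations\<close>

definition weyl_rows :: "(nat \<Rightarrow> complex) \<Rightarrow> nat \<Rightarrow> (nat \<Rightarrow> nat) \<Rightarrow> nat \<Rightarrow> nat \<Rightarrow> complex" where
  "weyl_rows x m lam i j = powi_diff (x j) (int (lam i + m - i + 1))"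

lemma sp_weyl_num_eq_leibniz_det: "sp_weyl_num m lam x = leibniz_det {1..m} (weyl_rows x m lam)"
  unfolding sp_weyl_num_def leibniz_det_def weyl_rows_def powi_diff_of_nat ..

lemma weyl_rows_one_pow:
  "i \<le> m \<Longrightarrow> weyl_rows x m (one_pow k) i j
     = powi_diff (x j) (int (if 1 \<le> i \<and> i \<le> k then m + 2 - i else m + 1 - i))"
  unfolding weyl_rows_def one_pow_def by (simp add: Suc_diff_le)

lemma one_pow_0: "one_pow 0 = (\<lambda>_. 0)"
  by (simp add: one_pow_def fun_eq_iff)

(* The rows of the numerator of (1^k) have the exponents m + 1, ..., m + 2 - k, m - k, ..., 1:
   every a in 1..m except m + 1 - k occurs, and inserting m + 1 - k at the top and shifting
   rows 1..k down by one gives the exponents m, ..., 1 of the denominator. *)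
lemma leibniz_det_weyl_rows_first_row_of_nat:
  assumes "1 \<le> k" "k \<le> m" "1 \<le> a" "a \<le> m"
  shows "leibniz_det {1..m} ((weyl_rows x m (one_pow k))(1 := (\<lambda>j. powi_diff (x j) (int a))))
       = (if a = m + 1 - k then (-1) ^ (k - 1) * leibniz_det {1..m} (weyl_rows x m (\<lambda>_. 0)) else 0)"
proof (cases "a = m + 1 - k")
  case True
  have shift: "cyclic_shift k permutes {1..m}" "sign (cyclic_shift k) = (-1) ^ (k - 1)"
    using cyclic_shift_permutes_sign[OF assms(1)] permutes_subset[of _ "{1..k}" "{1..m}"] assms(2)
    by auto
  have "leibniz_det {1..m} ((weyl_rows x m (one_pow k))(1 := (\<lambda>j. powi_diff (x j) (int a))))
      = leibniz_det {1..m} (\<lambda>i. weyl_rows x m (one_pow 0) (cyclic_shift k i))"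
    using assms True
    by (intro leibniz_det_cong) (auto simp: weyl_rows_one_pow cyclic_shift_def Suc_diff_le)
  then show ?thesis
    using True leibniz_det_permute_rows[OF _ shift(1)] shift(2) by (simp add: one_pow_0)
next
  case False
  define r where "r = (if m + 1 - k < a then m + 2 - a else m + 1 - a)"
  have r: "r \<in> {1..m}" "r \<noteq> 1"
    using assms False by (auto simp: r_def)
  have "weyl_rows x m (one_pow k) r = (\<lambda>j. powi_diff (x j) (int a))"
    using assms False by (auto simp: weyl_rows_one_pow r_def fun_eq_iff)
  then have "leibniz_det {1..m} ((weyl_rows x m (one_pow k))(1 := (\<lambda>j. powi_diff (x j) (int a)))) = 0"
    using r assms by (intro leibniz_det_identical_rows[of _ 1 r]) auto
  then show ?thesis
    using False by simp
qed

definition pm_delta :: "int \<Rightarrow> int \<Rightarrow> 'a::ring_1" where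
  "pm_delta t s = (if t = s then 1 else 0) - (if t = - s then 1 else 0)"

lemma leibniz_det_weyl_rows_first_row:
  assumes k: "1 \<le> k" "k \<le> m" and t: "\<bar>t\<bar> \<le> int m"
  shows "leibniz_det {1..m} ((weyl_rows x m (one_pow k))(1 := (\<lambda>j. powi_diff (x j) t)))
       = pm_delta t (int (m + 1 - k)) * (-1) ^ (k - 1) * leibniz_det {1..m} (weyl_rows x m (\<lambda>_. 0))"
proof -
  have first_index: "1 \<in> {1..m}"
    using k by simp
  consider "t = 0" | "t > 0" | "t < 0"
    by linarith
  then show ?thesis
  proof cases
    case 1
    have "leibniz_det {1..m} ((weyl_rows x m (one_pow k))(1 := (\<lambda>j. powi_diff (x j) t))) = 0"
      by (rule leibniz_det_zero_row[OF _ first_index]) (simp_all add: 1)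
    then show ?thesis
      using 1 k by (simp add: pm_delta_def)
  next
    case 2
    then have "t = int (nat t)" "1 \<le> nat t" "nat t \<le> m"
      using t by auto
    then show ?thesis
      using leibniz_det_weyl_rows_first_row_of_nat[OF k, of "nat t" x] k
      by (auto simp: pm_delta_def of_nat_diff)
  next
    case 3
    define a where "a = nat (- t)"
    have a: "t = - int a" "1 \<le> a" "a \<le> m"
      using 3 t by (auto simp: a_def)
    have row: "(\<lambda>j. powi_diff (x j) t) = (\<lambda>j. - 1 * powi_diff (x j) (int a))"
      using a(1) by (simp add: powi_diff_uminus)
    have "leibniz_det {1..m} ((weyl_rows x m (one_pow k))(1 := (\<lambda>j. powi_diff (x j) t)))
        = - leibniz_det {1..m} ((weyl_rows x m (one_pow k))(1 := (\<lambda>j. powi_diff (x j) (int a))))"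
      unfolding row leibniz_det_scale_row[OF finite_atLeastAtMost first_index] by simp
    then show ?thesis
      using leibniz_det_weyl_rows_first_row_of_nat[OF k a(2,3), of x] a k
      by (auto simp: pm_delta_def of_nat_diff)
  qed
qed

(* (S, k) indexes the term of the expansion of (z - 1/z) * prod_(l = 1..m) (z + 1/z - y_l) that
   takes -y_l from the factors with l in S and the k-th summand of powi_diff_expansion from the
   power (z - 1/z) * (z + 1/z)^(m - |S|) of the remaining ones. *)
definition rel_index :: "nat \<Rightarrow> (nat set \<times> nat) set" where
  "rel_index m = Sigma (Pow {1..m}) (\<lambda>S. {0..m - card S})"

definition rel_coeff :: "(nat \<Rightarrow> 'a::field) \<Rightarrow> nat \<Rightarrow> nat set \<times> nat \<Rightarrow> 'a" where
  "rel_coeff x m q = (\<Prod>l\<in>fst q. - (x l + inverse (x l))) * of_nat ((m - card (fst q)) choose snd q)"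

definition rel_exp :: "nat \<Rightarrow> nat set \<times> nat \<Rightarrow> int" where
  "rel_exp m q = int (m - card (fst q)) + 1 - 2 * int (snd q)"

lemma finite_rel_index: "finite (rel_index m)"
  unfolding rel_index_def by (intro finite_SigmaI) auto

lemma sum_rel_index: "(\<Sum>q\<in>rel_index m. F q) = (\<Sum>S\<in>Pow {1..m}. \<Sum>k = 0..m - card S. F (S, k))"
  unfolding rel_index_def by (subst sum.Sigma) auto

lemma rel_index_empty: "({}, 0) \<in> rel_index m" "rel_exp m ({}, 0) = int (m + 1)" "rel_coeff x m ({}, 0) = 1"
  by (auto simp: rel_index_def rel_exp_def rel_coeff_def)

lemma abs_rel_exp_le:
  assumes "q \<in> rel_index m" "q \<noteq> ({}, 0)"
  shows "\<bar>rel_exp m q\<bar> \<le> int m"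
proof -
  obtain S k where q: "q = (S, k)" "S \<subseteq> {1..m}" "k \<le> m - card S"
    using assms(1) unfolding rel_index_def by auto
  have "card S \<le> m"
    using q(2) card_mono[of "{1..m}" S] by auto
  moreover have "S \<noteq> {} \<Longrightarrow> card S \<ge> 1"
    using q(2) finite_subset[of S "{1..m}"] by (simp add: Suc_le_eq card_gt_0_iff)
  ultimately show ?thesis
    using q assms(2) by (cases "S = {}") (auto simp: rel_exp_def)
qed

lemma powi_diff_relation:
  fixes x :: "nat \<Rightarrow> 'a::field"
  assumes "j \<in> {1..m}" "x j \<noteq> 0"
  shows "(\<Sum>q\<in>rel_index m. rel_coeff x m q * powi_diff (x j) (rel_exp m q)) = 0"
proof -
  let ?y = "\<lambda>l. x l + inverse (x l)"
  have "(\<Sum>q\<in>rel_index m. rel_coeff x m q * powi_diff (x j) (rel_exp m q))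
      = (\<Sum>S\<in>Pow {1..m}. (\<Prod>l\<in>S. - ?y l) * ((x j - inverse (x j)) * ?y j ^ (m - card S)))"
    unfolding sum_rel_index rel_coeff_def rel_exp_def powi_diff_expansion[OF assms(2)]
    by (simp add: sum_distrib_left mult.assoc)
  also have "\<dots> = (x j - inverse (x j)) * (\<Sum>S\<in>Pow {1..m}. (\<Prod>l\<in>S. - ?y l) * (\<Prod>l\<in>{1..m} - S. ?y j))"
    by (auto simp: sum_distrib_left mult_ac card_Diff_subset finite_subset intro!: sum.cong)
  also have "\<dots> = (x j - inverse (x j)) * (\<Prod>l\<in>{1..m}. - ?y l + ?y j)"
    by (subst prod_add) auto
  also have "\<dots> = 0"
    using assms(1) by (subst prod_zero) (auto intro!: bexI[of _ j])
  finally show ?thesis .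
qed

lemma sum_rel_coeff_pm_delta_top: "(\<Sum>q\<in>rel_index m. rel_coeff x m q * pm_delta (rel_exp m q) (int (m + 1))) = 1"
proof -
  have "(\<Sum>q\<in>rel_index m - {({}, 0)}. rel_coeff x m q * pm_delta (rel_exp m q) (int (m + 1))) = 0"
  proof (intro sum.neutral ballI)
    fix q assume "q \<in> rel_index m - {({}, 0)}"
    then have "\<bar>rel_exp m q\<bar> \<le> int m"
      by (intro abs_rel_exp_le) auto
    then have "rel_exp m q \<noteq> int (m + 1)" "rel_exp m q \<noteq> - int (m + 1)"
      by auto
    then show "rel_coeff x m q * pm_delta (rel_exp m q) (int (m + 1)) = 0"
      by (simp add: pm_delta_def)
  qed
  then show ?thesis
    using sum.remove[OF finite_rel_index rel_index_empty(1),
        of "\<lambda>q. rel_coeff x m q * pm_delta (rel_exp m q) (int (m + 1))"]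
    by (simp add: rel_index_empty pm_delta_def)
qed

lemma weyl_rows_one_pow_first_row:
  assumes "1 \<le> k" "k \<le> m" "j \<in> {1..m}" "x j \<noteq> 0"
  shows "weyl_rows x m (one_pow k) 1 j
       = (\<Sum>q\<in>rel_index m - {({}, 0)}. - rel_coeff x m q * powi_diff (x j) (rel_exp m q))"
proof -
  have "0 = (\<Sum>q\<in>rel_index m. rel_coeff x m q * powi_diff (x j) (rel_exp m q))"
    using powi_diff_relation[of j m x] assms(3,4) by simp
  also have "\<dots> = weyl_rows x m (one_pow k) 1 j
      + (\<Sum>q\<in>rel_index m - {({}, 0)}. rel_coeff x m q * powi_diff (x j) (rel_exp m q))"
    using assms(1,2) sum.remove[OF finite_rel_index rel_index_empty(1),
        where g = "\<lambda>q. rel_coeff x m q * powi_diff (x j) (rel_exp m q)"]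
    by (simp add: rel_index_empty weyl_rows_one_pow)
  finally show ?thesis
    by (simp add: sum_negf eq_neg_iff_add_eq_0)
qed

lemma leibniz_det_weyl_rows_one_pow:
  assumes k: "1 \<le> k" "k \<le> m" and x: "\<forall>j\<in>{1..m}. x j \<noteq> 0"
  shows "leibniz_det {1..m} (weyl_rows x m (one_pow k))
       = (-1) ^ k * leibniz_det {1..m} (weyl_rows x m (\<lambda>_. 0))
         * (\<Sum>q\<in>rel_index m. rel_coeff x m q * pm_delta (rel_exp m q) (int (m + 1 - k)))"
proof -
  define Q where "Q = rel_index m - {({}, 0)}"
  have finite_Q: "finite Q"
    using finite_rel_index by (simp add: Q_def)
  have "leibniz_det {1..m} (weyl_rows x m (one_pow k))
      = (\<Sum>q\<in>Q. - rel_coeff x m q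
           * leibniz_det {1..m} ((weyl_rows x m (one_pow k))(1 := (\<lambda>j. powi_diff (x j) (rel_exp m q)))))"
    using k x weyl_rows_one_pow_first_row[OF k]
    by (intro leibniz_det_linear_row[OF _ finite_Q]) (auto simp: Q_def)
  also have "\<dots> = (\<Sum>q\<in>Q. - rel_coeff x m q * (pm_delta (rel_exp m q) (int (m + 1 - k)) * (-1) ^ (k - 1)
                                              * leibniz_det {1..m} (weyl_rows x m (\<lambda>_. 0))))"
  proof (intro sum.cong refl)
    fix q assume "q \<in> Q"
    then have "\<bar>rel_exp m q\<bar> \<le> int m"
      by (intro abs_rel_exp_le) (auto simp: Q_def)
    then show "- rel_coeff x m q
           * leibniz_det {1..m} ((weyl_rows x m (one_pow k))(1 := (\<lambda>j. powi_diff (x j) (rel_exp m q))))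
        = - rel_coeff x m q * (pm_delta (rel_exp m q) (int (m + 1 - k)) * (-1) ^ (k - 1)
                                              * leibniz_det {1..m} (weyl_rows x m (\<lambda>_. 0)))"
      by (simp only: leibniz_det_weyl_rows_first_row[OF k])
  qed
  also have "\<dots> = (-1) ^ k * leibniz_det {1..m} (weyl_rows x m (\<lambda>_. 0))
                   * (\<Sum>q\<in>Q. rel_coeff x m q * pm_delta (rel_exp m q) (int (m + 1 - k)))"
    using k by (cases k) (simp_all add: sum_distrib_left mult_ac)
  also have "(\<Sum>q\<in>Q. rel_coeff x m q * pm_delta (rel_exp m q) (int (m + 1 - k)))
      = (\<Sum>q\<in>rel_index m. rel_coeff x m q * pm_delta (rel_exp m q) (int (m + 1 - k)))"
    using k sum.remove[OF finite_rel_index rel_index_empty(1),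
        where g = "\<lambda>q. rel_coeff x m q * pm_delta (rel_exp m q) (int (m + 1 - k))"]
    by (simp add: Q_def rel_index_empty pm_delta_def)
  finally show ?thesis .
qed

lemma sp_char_one_pow:
  assumes "k \<le> m" "\<forall>j\<in>{1..m}. x j \<noteq> 0" "sp_weyl_num m (\<lambda>_. 0) x \<noteq> 0"
  shows "sp_char m (one_pow k) x
       = (-1) ^ k * (\<Sum>q\<in>rel_index m. rel_coeff x m q * pm_delta (rel_exp m q) (int (m + 1 - k)))"
proof (cases "k = 0")
  case True
  then show ?thesis
    using assms(3) sum_rel_coeff_pm_delta_top[of x m] by (simp add: sp_char_def one_pow_0)
next
  case False
  then have "1 \<le> k"
    by simp
  then show ?thesis
    using assms(3) leibniz_det_weyl_rows_one_pow[OF _ assms(1,2)]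
    by (simp add: sp_char_def sp_weyl_num_eq_leibniz_det)
qed

section \<open>Binomial sums\<close>

lemma sum_by_card_parity:
  fixes c :: "nat \<Rightarrow> 'a::comm_ring_1" and f :: "nat set \<Rightarrow> 'a"
  shows "(\<Sum>l = 0..m div 2. c l * (\<Sum>S | S \<subseteq> {1..m} \<and> card S = m - 2 * l. f S))
       = (\<Sum>S\<in>Pow {1..m}. if even (m - card S) then c ((m - card S) div 2) * f S else 0)"
proof -
  have card_le: "card S \<le> m" if "S \<subseteq> {1..m}" for S
    using card_mono[OF _ that] by simp
  have "(\<Sum>l = 0..m div 2. c l * (\<Sum>S | S \<subseteq> {1..m} \<and> card S = m - 2 * l. f S))
      = (\<Sum>(l, S)\<in>Sigma {0..m div 2} (\<lambda>l. {S. S \<subseteq> {1..m} \<and> card S = m - 2 * l}). c l * f S)"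
    unfolding sum_distrib_left
    by (rule sum.Sigma) (auto intro: finite_subset[of _ "Pow {1..m}"])
  also have "\<dots> = (\<Sum>S\<in>{S \<in> Pow {1..m}. even (m - card S)}. c ((m - card S) div 2) * f S)"
    by (rule sum.reindex_bij_witness[of _ "\<lambda>S. ((m - card S) div 2, S)" snd])
       (use card_le in \<open>fastforce+\<close>)
  also have "\<dots> = (\<Sum>S\<in>Pow {1..m}. if even (m - card S) then c ((m - card S) div 2) * f S else 0)"
    by (rule sum.inter_filter) simp
  finally show ?thesis .
qed

lemma sum_choose_pm_delta_odd:
  fixes g :: "nat \<Rightarrow> 'a::comm_ring_1"
  assumes "n \<le> m"
  shows "(\<Sum>i = 0..n. of_nat (n choose i)
            * (\<Sum>j = 0..m div 2. g j * pm_delta (int n + 1 - 2 * int i) (2 * int j + 1)))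
       = (if even n then \<Sum>i = 0..n. of_nat (n choose i)
            * (if i \<le> n div 2 then g (n div 2 - i) else - g (i - n div 2 - 1)) else 0)"
proof -
  have "(\<Sum>j = 0..m div 2. g j * pm_delta (int n + 1 - 2 * int i) (2 * int j + 1))
      = (if even n then if i \<le> n div 2 then g (n div 2 - i) else - g (i - n div 2 - 1) else 0)"
    if "i \<le> n" for i
  proof -
    have plus: "int n + 1 - 2 * int i = 2 * int j + 1 \<longleftrightarrow> even n \<and> i \<le> n div 2 \<and> j = n div 2 - i" for j
      by presburger
    have minus: "int n + 1 - 2 * int i = - (2 * int j + 1) \<longleftrightarrow> even n \<and> n div 2 < i \<and> j = i - n div 2 - 1" for j
      by presburger
    have "(\<Sum>j = 0..m div 2. g j * pm_delta (int n + 1 - 2 * int i) (2 * int j + 1))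
        = (\<Sum>j = 0..m div 2. if j = n div 2 - i then if even n \<and> i \<le> n div 2 then g j else 0 else 0)
          - (\<Sum>j = 0..m div 2. if j = i - n div 2 - 1 then if even n \<and> n div 2 < i then g j else 0 else 0)"
      unfolding sum_subtractf[symmetric] pm_delta_def plus minus by (intro sum.cong) auto
    then show ?thesis
      using assms that by (auto simp: sum.delta)
  qed
  then show ?thesis
    by (auto intro: sum.cong)
qed

lemma sum_choose_lower_minus_upper_half:
  assumes "even n"
  shows "(\<Sum>i = 0..n. of_nat (n choose i) * (if i \<le> n div 2 then 1 else -1))
       = (of_nat (n choose (n div 2)) :: 'a::comm_ring_1)"
proof -
  obtain h where n: "n = h + h"
    using assms by (metis evenE mult_2)
  have upper: "(\<Sum>i = h + 1..h + h. of_nat (n choose i)) = (\<Sum>i<h. (of_nat (n choose i) :: 'a))"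
    by (rule sum.reindex_bij_witness[of _ "\<lambda>i. n - i" "\<lambda>i. n - i"])
       (auto simp: n binomial_symmetric[symmetric])
  have "(\<Sum>i = 0..n. of_nat (n choose i) * (if i \<le> n div 2 then 1 else -1))
      = (\<Sum>i = 0..h. (of_nat (n choose i) :: 'a)) - (\<Sum>i = h + 1..h + h. of_nat (n choose i))"
    unfolding n sum.ub_add_nat[of 0 h _ h, simplified]
    by (simp add: sum_negf[symmetric])
  also have "(\<Sum>i = 0..h. (of_nat (n choose i) :: 'a)) = (\<Sum>i<h. of_nat (n choose i)) + of_nat (n choose h)"
    by (simp add: atLeast0AtMost lessThan_Suc_atMost[symmetric])
  finally show ?thesis
    unfolding upper using n by simp
qed

lemma sum_choose_alternating_folded:
  assumes "even n"
  shows "(\<Sum>i = 0..n. of_nat (n choose i)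
            * (if i \<le> n div 2 then (-1) ^ (n div 2 - i) else - ((-1) ^ (i - n div 2 - 1))))
       = (if n = 0 then 1 else (0 :: 'a::comm_ring_1))"
proof -
  have sign: "(if i \<le> h then (-1) ^ (h - i) else - ((-1) ^ (i - h - 1))) = ((-1) ^ (h + i) :: 'a)"
    for h i :: nat
    by (auto simp: minus_one_power_iff; presburger)
  have "(\<Sum>i = 0..n. of_nat (n choose i) * (-1) ^ (n div 2 + i))
      = (-1) ^ (n div 2) * (\<Sum>i\<le>n. (-1) ^ i * (of_nat (n choose i) :: 'a))"
    by (simp add: sum_distrib_left atLeast0AtMost power_add mult_ac)
  then show ?thesis
    unfolding sign using choose_alternating_sum[of n, where 'a = 'a] by (cases "n = 0") auto
qed

lemma sp_char_one_pow_diff_double: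
  assumes "2 * j \<le> m" "\<forall>i\<in>{1..m}. x i \<noteq> 0" "sp_weyl_num m (\<lambda>_. 0) x \<noteq> 0"
  shows "sp_char m (one_pow (m - 2 * j)) x
       = (-1) ^ m * (\<Sum>q\<in>rel_index m. rel_coeff x m q * pm_delta (rel_exp m q) (2 * int j + 1))"
proof -
  have sign: "(-1 :: complex) ^ (m - 2 * j) = (-1) ^ m"
    using assms(1) by (simp add: minus_one_power_iff)
  have exponent: "int (m + 1 - (m - 2 * j)) = 2 * int j + 1"
    using assms(1) by simp
  show ?thesis
    unfolding sp_char_one_pow[OF diff_le_self assms(2,3)] sign exponent ..
qed

lemma neg_one_power_mult_prod_uminus:
  assumes "card S \<le> m"
  shows "(-1) ^ m * (\<Prod>l\<in>S. - f l) = (-1) ^ (m - card S) * (\<Prod>l\<in>S. f l :: 'a::comm_ring_1)"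
  using assms
  by (simp add: prod_uminus mult.assoc[symmetric] power_add[symmetric]
      neg_one_power_add_eq_neg_one_power_diff)

section \<open>Summing the characters\<close>

lemma sum_weighted_sp_char_one_pow:
  fixes g :: "nat \<Rightarrow> complex"
  assumes x: "\<forall>i\<in>{1..m}. x i \<noteq> 0" and D: "sp_weyl_num m (\<lambda>_. 0) x \<noteq> 0"
  shows "(\<Sum>j = 0..m div 2. g j * sp_char m (one_pow (m - 2 * j)) x)
       = (\<Sum>S\<in>Pow {1..m}. (-1) ^ (m - card S) * (\<Prod>l\<in>S. x l + inverse (x l))
            * (\<Sum>i = 0..m - card S. of_nat ((m - card S) choose i)
                 * (\<Sum>j = 0..m div 2. g j * pm_delta (int (m - card S) + 1 - 2 * int i) (2 * int j + 1))))"
proof -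
  let ?y = "\<lambda>l. x l + inverse (x l)"
  have "(\<Sum>j = 0..m div 2. g j * sp_char m (one_pow (m - 2 * j)) x)
      = (-1) ^ m * (\<Sum>q\<in>rel_index m. rel_coeff x m q
                      * (\<Sum>j = 0..m div 2. g j * pm_delta (rel_exp m q) (2 * int j + 1)))"
  proof -
    have "(\<Sum>j = 0..m div 2. g j * sp_char m (one_pow (m - 2 * j)) x)
        = (\<Sum>j = 0..m div 2. \<Sum>q\<in>rel_index m.
             (-1) ^ m * (rel_coeff x m q * (g j * pm_delta (rel_exp m q) (2 * int j + 1))))"
    proof (intro sum.cong refl)
      fix j assume "j \<in> {0..m div 2}"
      then have j: "2 * j \<le> m"
        by auto
      show "g j * sp_char m (one_pow (m - 2 * j)) x = (\<Sum>q\<in>rel_index m.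
             (-1) ^ m * (rel_coeff x m q * (g j * pm_delta (rel_exp m q) (2 * int j + 1))))"
        unfolding sp_char_one_pow_diff_double[OF j x D] by (simp add: sum_distrib_left mult_ac)
    qed
    also have "\<dots> = (\<Sum>q\<in>rel_index m. \<Sum>j = 0..m div 2.
             (-1) ^ m * (rel_coeff x m q * (g j * pm_delta (rel_exp m q) (2 * int j + 1))))"
      by (rule sum.swap)
    finally show ?thesis
      by (simp add: sum_distrib_left)
  qed
  also have "\<dots> = (\<Sum>S\<in>Pow {1..m}. (-1) ^ m * (\<Prod>l\<in>S. - ?y l)
            * (\<Sum>i = 0..m - card S. of_nat ((m - card S) choose i)
                 * (\<Sum>j = 0..m div 2. g j * pm_delta (int (m - card S) + 1 - 2 * int i) (2 * int j + 1))))"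
    unfolding sum_rel_index rel_coeff_def rel_exp_def by (simp add: sum_distrib_left mult_ac)
  also have "\<dots> = (\<Sum>S\<in>Pow {1..m}. (-1) ^ (m - card S) * (\<Prod>l\<in>S. ?y l)
            * (\<Sum>i = 0..m - card S. of_nat ((m - card S) choose i)
                 * (\<Sum>j = 0..m div 2. g j * pm_delta (int (m - card S) + 1 - 2 * int i) (2 * int j + 1))))"
    by (intro sum.cong refl, subst neg_one_power_mult_prod_uminus) (use card_mono[of "{1..m}"] in auto)
  finally show ?thesis .
qed

lemma sum_sp_char_one_pow:
  assumes "\<forall>i\<in>{1..m}. x i \<noteq> 0" "sp_weyl_num m (\<lambda>_. 0) x \<noteq> 0"
  shows "(\<Sum>j = 0..m div 2. sp_char m (one_pow (m - 2 * j)) x)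
       = (\<Sum>S\<in>Pow {1..m}. if even (m - card S)
            then of_nat ((m - card S) choose ((m - card S) div 2)) * (\<Prod>l\<in>S. x l + inverse (x l)) else 0)"
proof -
  have "(\<Sum>j = 0..m div 2. sp_char m (one_pow (m - 2 * j)) x)
      = (\<Sum>j = 0..m div 2. 1 * sp_char m (one_pow (m - 2 * j)) x)"
    by simp
  also have "\<dots> = (\<Sum>S\<in>Pow {1..m}. if even (m - card S)
            then of_nat ((m - card S) choose ((m - card S) div 2)) * (\<Prod>l\<in>S. x l + inverse (x l)) else 0)"
    unfolding sum_weighted_sp_char_one_pow[OF assms]
  proof (intro sum.cong refl)
    fix S :: "nat set"
    show "(-1) ^ (m - card S) * (\<Prod>l\<in>S. x l + inverse (x l))
            * (\<Sum>i = 0..m - card S. of_nat ((m - card S) choose i)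
                 * (\<Sum>j = 0..m div 2. 1 * pm_delta (int (m - card S) + 1 - 2 * int i) (2 * int j + 1)))
        = (if even (m - card S)
            then of_nat ((m - card S) choose ((m - card S) div 2)) * (\<Prod>l\<in>S. x l + inverse (x l)) else 0)"
      unfolding sum_choose_pm_delta_odd[OF diff_le_self]
      by (cases "even (m - card S)") (simp_all add: sum_choose_lower_minus_upper_half)
  qed
  finally show ?thesis .
qed

lemma alternating_sum_sp_char_one_pow:
  assumes "\<forall>i\<in>{1..m}. x i \<noteq> 0" "sp_weyl_num m (\<lambda>_. 0) x \<noteq> 0"
  shows "(\<Sum>j = 0..m div 2. (-1) ^ j * sp_char m (one_pow (m - 2 * j)) x)
       = (\<Prod>i = 1..m. x i + inverse (x i))"
proof -
  have "(\<Sum>j = 0..m div 2. (-1) ^ j * sp_char m (one_pow (m - 2 * j)) x)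
      = (\<Sum>S\<in>Pow {1..m}. if S = {1..m} then (\<Prod>l\<in>S. x l + inverse (x l)) else 0)"
    unfolding sum_weighted_sp_char_one_pow[OF assms]
  proof (intro sum.cong refl)
    fix S assume S: "S \<in> Pow {1..m}"
    show "(-1) ^ (m - card S) * (\<Prod>l\<in>S. x l + inverse (x l))
            * (\<Sum>i = 0..m - card S. of_nat ((m - card S) choose i)
                 * (\<Sum>j = 0..m div 2. (-1) ^ j * pm_delta (int (m - card S) + 1 - 2 * int i) (2 * int j + 1)))
        = (if S = {1..m} then (\<Prod>l\<in>S. x l + inverse (x l)) else 0)"
    proof (cases "S = {1..m}")
      case False
      then have "m - card S \<noteq> 0"
        using S card_seteq[of "{1..m}" S] by auto
      then show ?thesis
        unfolding sum_choose_pm_delta_odd[OF diff_le_self]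
        using False by (cases "even (m - card S)") (simp_all add: sum_choose_alternating_folded)
    qed (unfold sum_choose_pm_delta_odd[OF diff_le_self], simp)
  qed
  also have "\<dots> = (\<Prod>i = 1..m. x i + inverse (x i))"
    by (simp add: sum.delta)
  finally show ?thesis .
qed

theorem mainTheorem3:
  fixes m :: nat and x :: "nat \<Rightarrow> complex"
  assumes "m \<ge> 1"
    and "\<forall>i\<in>{1..m}. x i \<noteq> 0"
    and "sp_weyl_num m (\<lambda>_. 0) x \<noteq> 0"
  shows "((\<Sum>l = 0..m div 2. of_nat ((2*l) choose l) *
            (\<Sum>S | S \<subseteq> {1..m} \<and> card S = m - 2*l. \<Prod>i\<in>S. (x i + inverse (x i))))
         = (\<Sum>j = 0..m div 2. sp_char m (one_pow (m - 2*j)) x))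
         \<and> ((\<Prod>i = 1..m. (x i + inverse (x i)))
         = (\<Sum>j = 0..m div 2. (-1)^j * sp_char m (one_pow (m - 2*j)) x))"
proof -
  have "(\<Sum>l = 0..m div 2. of_nat ((2*l) choose l) *
            (\<Sum>S | S \<subseteq> {1..m} \<and> card S = m - 2*l. \<Prod>i\<in>S. (x i + inverse (x i))))
      = (\<Sum>S\<in>Pow {1..m}. if even (m - card S)
            then of_nat ((m - card S) choose ((m - card S) div 2)) * (\<Prod>l\<in>S. x l + inverse (x l)) else 0)"
    unfolding sum_by_card_parity by (intro sum.cong refl) auto
  then show ?thesis
    using sum_sp_char_one_pow[OF assms(2,3)] alternating_sum_sp_char_one_pow[OF assms(2,3)] by simp
qed

end
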